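(* Let $X$ be a semi-permutation, let $T$ be any partitioning tree for $X$, let $U\subseteq V(T)$ be a set of vertices such that every root-to-leaf path of $T$ contains exactly one vertex of $U$, and let $(X^c,\{X^s_v\}_{v\in U})$ be the split of $(X,T)$ at $U$. Then $$\sum_{v\in U}\mathrm{opt}(X^s_v)+\mathrm{opt}(X^c)\le \mathrm{opt}(X).$$
   Context: Points have integer coordinates. Two points $p,q$ are collinear if $p.x=q.x$ or $p.y=q.y$; otherwise $\square_{p,q}$ is the smallest closed axis-parallel rectangle containing both. A non-collinear pair $(p,q)$ is satisfied in $S$ if some $r\in S\setminus\{p,q\}$ lies in $\square_{p,q}$; $S$ is satisfied if all its non-collinear pairs are. A row (column) is active for $X$ if it contains a point of $X$; $X$ is a semi-permutation if each active row contains exactly one point of $X$. $\mathrm{opt}(X)$ is the minimum $|Y|$ with $X\cup Y$ satisfied (and is $0$ if $X$ has one active column). Partitioning tree: let $B$ be the bounding box of $X$ and $\mathcal L$ the set of vertical lines with half-integral $x$-coordinate strictly between the minimum and maximum $x$-coordinates of $X$. A partitioning tree $T$ is a rooted binary tree whose vertices $v$ carry closed vertical strips $S(v)$: $S(\mathrm{root})=B$; an internal vertex $v$ owns a line $L(v)\in\mathcal L$ lying strictly inside $S(v)$ and its two children carry the two strips into which $L(v)$ splits $S(v)$; each leaf strip contains exactly one active column of $X$ (this is the tree produced by processing the lines of $\mathcal L$ in some order, each line splitting the current strip containing it). Split at $U$: for $v\in U$, the strip instance $X^s_v=X\cap S(v)$; the compressed instance $X^c$ is obtained by replacing, for every $v\in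 U$, each point $p\in X\cap S(v)$ by the point $(x_v,p.y)$, where $x_v$ is the $x$-coordinate of the leftmost active column of $X$ in $S(v)$ (i.e., collapsing all active columns of each strip $S(v)$ into one column). *)

theory Defs
  imports Main
begin

type_synonym point = "int \<times> int"

definition collinear :: "point \<Rightarrow> point \<Rightarrow> bool" where
  "collinear p q \<longleftrightarrow> fst p = fst q \<or> snd p = snd q"

definition rect :: "point \<Rightarrow> point \<Rightarrow> point set" where
  "rect p q = {r. min (fst p) (fst q) \<le> fst r \<and> fst r \<le> max (fst p) (fst q)
                 \<and> min (snd p) (snd q) \<le> snd r \<and> snd r \<le> max (snd p) (snd q)}"

definition pair_satisfied :: "point set \<Rightarrow> point \<Rightarrow> point \<Rightarrow> bool" where
  "pair_satisfied S p q \<longleftrightarrow> collinear p q \<or> (\<exists>r \<in> S - {p, q}. r \<in> rect p q)"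

definition satisfied :: "point set \<Rightarrow> bool" where
  "satisfied S \<longleftrightarrow> (\<forall>p\<in>S. \<forall>q\<in>S. pair_satisfied S p q)"

definition semi_perm :: "point set \<Rightarrow> bool" where
  "semi_perm X \<longleftrightarrow> (\<forall>p\<in>X. \<forall>q\<in>X. snd p = snd q \<longrightarrow> p = q)"

definition opt :: "point set \<Rightarrow> nat" where
  "opt X = (if card (fst ` X) \<le> 1 then 0
            else (LEAST n. \<exists>Y. finite Y \<and> card Y = n \<and> satisfied (X \<union> Y)))"

(* Partitioning tree: a node Node k l r owns the vertical line x = k + 1/2.
   Strips are represented by their (integer) column range [lo, hi]; the integer
   points of the closed strip are exactly those with lo \<le> x \<le> hi. *)
datatype ptree = Leaf | Node int ptree ptree

definition active_cols :: "point set \<Rightarrow> int \<Rightarrow> int \<Rightarrow> int set" where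
  "active_cols X lo hi = {c. lo \<le> c \<and> c \<le> hi \<and> c \<in> fst ` X}"

fun is_ptree :: "point set \<Rightarrow> int \<Rightarrow> int \<Rightarrow> ptree \<Rightarrow> bool" where
  "is_ptree X lo hi Leaf \<longleftrightarrow> card (active_cols X lo hi) = 1"
| "is_ptree X lo hi (Node k l r) \<longleftrightarrow>
     lo \<le> k \<and> k + 1 \<le> hi \<and> is_ptree X lo k l \<and> is_ptree X (k + 1) hi r"

definition partitioning_tree :: "point set \<Rightarrow> ptree \<Rightarrow> bool" where
  "partitioning_tree X t \<longleftrightarrow> is_ptree X (Min (fst ` X)) (Max (fst ` X)) t"

(* vertices: (path from root, lo, hi) ; False = left child, True = right child *)
fun ptree_nodes :: "int \<Rightarrow> int \<Rightarrow> ptree \<Rightarrow> (bool list \<times> int \<times> int) set" where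
  "ptree_nodes lo hi Leaf = {([], lo, hi)}"
| "ptree_nodes lo hi (Node k l r) = {([], lo, hi)}
     \<union> (\<lambda>(p, a, b). (False # p, a, b)) ` ptree_nodes lo k l
     \<union> (\<lambda>(p, a, b). (True # p, a, b)) ` ptree_nodes (k + 1) hi r"

fun ptree_leaves :: "int \<Rightarrow> int \<Rightarrow> ptree \<Rightarrow> (bool list \<times> int \<times> int) set" where
  "ptree_leaves lo hi Leaf = {([], lo, hi)}"
| "ptree_leaves lo hi (Node k l r) =
     (\<lambda>(p, a, b). (False # p, a, b)) ` ptree_leaves lo k l
     \<union> (\<lambda>(p, a, b). (True # p, a, b)) ` ptree_leaves (k + 1) hi r"

definition vertices :: "point set \<Rightarrow> ptree \<Rightarrow> (bool list \<times> int \<times> int) set" where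
  "vertices X t = ptree_nodes (Min (fst ` X)) (Max (fst ` X)) t"

definition leaves :: "point set \<Rightarrow> ptree \<Rightarrow> (bool list \<times> int \<times> int) set" where
  "leaves X t = ptree_leaves (Min (fst ` X)) (Max (fst ` X)) t"

definition cut_set :: "point set \<Rightarrow> ptree \<Rightarrow> (bool list \<times> int \<times> int) set \<Rightarrow> bool" where
  "cut_set X t U \<longleftrightarrow> U \<subseteq> vertices X t \<and>
     (\<forall>l \<in> leaves X t. card {v \<in> U. \<exists>n. fst v = take n (fst l)} = 1)"

definition strip_inst :: "point set \<Rightarrow> bool list \<times> int \<times> int \<Rightarrow> point set" where
  "strip_inst X v = {q \<in> X. fst (snd v) \<le> fst q \<and> fst q \<le> snd (snd v)}"

definition strip_x :: "point set \<Rightarrow> bool list \<times> int \<times> int \<Rightarrow> int" where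
  "strip_x X v = Min (fst ` strip_inst X v)"

definition compressed :: "point set \<Rightarrow> (bool list \<times> int \<times> int) set \<Rightarrow> point set" where
  "compressed X U = {(strip_x X v, snd q) | q v. v \<in> U \<and> q \<in> strip_inst X v}"

end

theory Submission
  imports Defs "HOL-Library.Sublist"
begin

text \<open>
  If a semi-permutation X lies in a finite satisfied set Z, then opt X + (number of rows of Z)
  \<le> |Z|: a row of Z without a point of X can be moved onto a neighbouring row of Z; this is a
  monotone map of the coordinates, so it keeps Z satisfied, and it loses a point because two
  adjacent rows of a satisfied set share a column.
  Now let Z be the part of X \<union> Y inside the column range of X, for an optimal solution Y.
  The bound above, applied to every strip Z \<inter> S(v), controls the strip instances. Collapsing
  the columns of every strip S(v) onto x_v is monotone as well, so it turns Z into a satisfied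
  superset of X^c with at most as many points as the strips have rows in total. Adding both
  bounds, the row counts cancel and what remains is |Z| - |X| \<le> opt X.
\<close>

section \<open>Monotone coordinate maps preserve satisfaction\<close>

lemma rect_eq_box:
  "rect p q = {min (fst p) (fst q)..max (fst p) (fst q)} \<times> {min (snd p) (snd q)..max (snd p) (snd q)}"
  by (auto simp: rect_def)

lemma finite_rect: "finite (rect p q)"
  by (simp add: rect_eq_box)

lemma rect_commute: "rect p q = rect q p"
  by (auto simp: rect_def)

lemma card_rect_less:
  assumes "r \<in> rect p q" "r \<noteq> p" "p \<in> Z"
  shows "card (Z \<inter> rect r q) < card (Z \<inter> rect p q)"
proof (rule psubset_card_mono)
  show "finite (Z \<inter> rect p q)"
    by (simp add: finite_rect)
  have "rect r q \<subseteq> rect p q" "p \<notin> rect r q"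
    using assms(1,2) by (auto simp: rect_def prod_eq_iff)
  moreover have "p \<in> rect p q"
    by (simp add: rect_def)
  ultimately show "Z \<inter> rect r q \<subset> Z \<inter> rect p q"
    using assms(3) by blast
qed

lemma mono_on_between:
  fixes h :: "'a::linorder \<Rightarrow> 'b::linorder"
  assumes "mono_on A h" "a \<in> A" "b \<in> A" "c \<in> A" "min a b \<le> c" "c \<le> max a b"
  shows "min (h a) (h b) \<le> h c \<and> h c \<le> max (h a) (h b)"
  using assms by (cases "a \<le> b") (auto simp: min_def max_def dest: mono_onD)

lemma map_prod_rect:
  assumes "mono_on (fst ` Z) f" "mono_on (snd ` Z) g" "p \<in> Z" "q \<in> Z" "r \<in> Z" "r \<in> rect p q"
  shows "map_prod f g r \<in> rect (map_prod f g p) (map_prod f g q)"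
  using mono_on_between[OF assms(1), of "fst p" "fst q" "fst r"]
    mono_on_between[OF assms(2), of "snd p" "snd q" "snd r"] assms(3-6)
  by (auto simp: rect_def map_prod_def split: prod.splits)

lemma satisfied_map_prod:
  assumes sat: "satisfied Z" and f: "mono_on (fst ` Z) f" and g: "mono_on (snd ` Z) g"
  shows "satisfied (map_prod f g ` Z)"
proof -
  let ?h = "map_prod f g"
  have "\<exists>r\<in>Z. ?h r \<notin> {?h p, ?h q} \<and> ?h r \<in> rect (?h p) (?h q)"
    if "p \<in> Z" "q \<in> Z" "\<not> collinear (?h p) (?h q)" for p q
    using that
  proof (induction "card (Z \<inter> rect p q)" arbitrary: p q rule: less_induct)
    \<comment> \<open>a witness mapped onto a corner spans a smaller rectangle with the opposite corner\<close>
    case less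
    have "\<not> collinear p q"
      using less.prems(3) by (auto simp: collinear_def map_prod_def split: prod.splits)
    then obtain r where r: "r \<in> Z" "r \<noteq> p" "r \<noteq> q" "r \<in> rect p q"
      using sat less.prems(1,2) unfolding satisfied_def pair_satisfied_def by blast
    show ?case
    proof (cases "?h r = ?h p")
      case True
      have "card (Z \<inter> rect r q) < card (Z \<inter> rect p q)"
        using card_rect_less r(4,2) less.prems(1) .
      then show ?thesis
        using less.hyps r(1) less.prems(2,3) True by metis
    next
      case hrp: False
      show ?thesis
      proof (cases "?h r = ?h q")
        case True
        have "r \<in> rect q p"
          using r(4) by (simp add: rect_commute)
        from card_rect_less[OF this r(3) less.prems(2)]
        have "card (Z \<inter> rect p r) < card (Z \<inter> rect p q)"
          by (metis rect_commute)
        then show ?thesis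
          using less.hyps r(1) less.prems(1,3) True by metis
      next
        case False
        then show ?thesis
          using hrp r map_prod_rect[OF f g less.prems(1,2)] by blast
      qed
    qed
  qed
  then show ?thesis
    unfolding satisfied_def pair_satisfied_def by (simp add: image_iff) blast
qed

lemma satisfied_restrict_columns:
  assumes "satisfied S"
  shows "satisfied {p \<in> S. a \<le> fst p \<and> fst p \<le> b}"
  unfolding satisfied_def
proof (intro ballI)
  let ?S = "{p \<in> S. a \<le> fst p \<and> fst p \<le> b}"
  fix p q
  assume p: "p \<in> ?S" and q: "q \<in> ?S"
  have "pair_satisfied S p q"
    using assms p q unfolding satisfied_def by blast
  moreover have "a \<le> fst r \<and> fst r \<le> b" if "r \<in> rect p q" for r
    using that p q by (auto simp: rect_def)
  ultimately show "pair_satisfied ?S p q"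
    unfolding pair_satisfied_def by blast
qed

lemma satisfied_single_column:
  assumes "finite X" "card (fst ` X) \<le> 1"
  shows "satisfied X"
proof -
  have "fst p = fst q" if "p \<in> X" "q \<in> X" for p q
    using assms that by (metis card_le_Suc0_iff_eq finite_imageI image_eqI One_nat_def)
  then show ?thesis
    unfolding satisfied_def pair_satisfied_def collinear_def by blast
qed

lemma satisfied_grid: "satisfied (A \<times> B)"
  unfolding satisfied_def pair_satisfied_def collinear_def
proof (intro ballI)
  fix p q
  assume "p \<in> A \<times> B" "q \<in> A \<times> B"
  then have "\<not> (fst p = fst q \<or> snd p = snd q) \<Longrightarrow> (fst p, snd q) \<in> A \<times> B - {p, q}"
    by (auto simp: prod_eq_iff)
  moreover have "(fst p, snd q) \<in> rect p q"
    by (simp add: rect_def)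
  ultimately show "(fst p = fst q \<or> snd p = snd q) \<or> (\<exists>r\<in>A \<times> B - {p, q}. r \<in> rect p q)"
    by blast
qed

lemma opt_le_card_diff:
  assumes "finite Z" "satisfied Z" "W \<subseteq> Z"
  shows "opt W \<le> card (Z - W)"
proof -
  have "W \<union> (Z - W) = Z"
    using assms(3) by blast
  then have "\<exists>Y. finite Y \<and> card Y = card (Z - W) \<and> satisfied (W \<union> Y)"
    using assms(1,2) by (metis finite_Diff)
  then show ?thesis
    unfolding opt_def by (simp add: Least_le)
qed

lemma opt_witness:
  assumes "finite X"
  obtains Y where "finite Y" "card Y = opt X" "satisfied (X \<union> Y)"
proof (cases "card (fst ` X) \<le> 1")
  case True
  then show ?thesis
    using that[of "{}"] satisfied_single_column[OF assms] by (simp add: opt_def)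
next
  case False
  have "X \<union> fst ` X \<times> snd ` X = fst ` X \<times> snd ` X"
    by (auto intro: rev_image_eqI)
  then have "\<exists>Y. finite Y \<and> card Y = card (fst ` X \<times> snd ` X) \<and> satisfied (X \<union> Y)"
    using assms satisfied_grid by (metis finite_SigmaI finite_imageI)
  from LeastI[of "\<lambda>n. \<exists>Y. finite Y \<and> card Y = n \<and> satisfied (X \<union> Y)", OF this]
  show ?thesis
    using False that unfolding opt_def by auto
qed

section \<open>Merging adjacent rows\<close>

lemma obtain_nearest_neighbour:
  fixes a :: int
  assumes "b \<in> R" "b \<noteq> a"
  obtains b' where "b' \<in> R" "b' \<noteq> a" "\<And>y. y \<in> R \<Longrightarrow> min a b' \<le> y \<Longrightarrow> y \<le> max a b' \<Longrightarrow> y = a \<or> y = b'"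
proof -
  obtain b' where b': "b' \<in> R - {a}" and least: "\<And>y. y \<in> R - {a} \<Longrightarrow> nat \<bar>b' - a\<bar> \<le> nat \<bar>y - a\<bar>"
    using ex_has_least_nat[of "\<lambda>y. y \<in> R - {a}" b "\<lambda>y. nat \<bar>y - a\<bar>"] assms by blast
  have "y = a \<or> y = b'" if "y \<in> R" "min a b' \<le> y" "y \<le> max a b'" for y
    using least[of y] that by (cases "y = a") (auto simp: min_def max_def split: if_splits)
  then show ?thesis
    using that b' by blast
qed

lemma adjacent_rows_share_column:
  assumes sat: "satisfied Z" and ab: "a \<noteq> b" and "(ca, a) \<in> Z" "(cb, b) \<in> Z"
    and gap: "\<And>y. y \<in> snd ` Z \<Longrightarrow> min a b \<le> y \<Longrightarrow> y \<le> max a b \<Longrightarrow> y = a \<or> y = b"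
  obtains c where "(c, a) \<in> Z" "(c, b) \<in> Z"
proof -
  obtain p q where pq: "p \<in> Z" "q \<in> Z" "snd p = a" "snd q = b"
    and least: "\<And>p' q'. p' \<in> Z \<Longrightarrow> q' \<in> Z \<Longrightarrow> snd p' = a \<Longrightarrow> snd q' = b \<Longrightarrow>
                  nat \<bar>fst p - fst q\<bar> \<le> nat \<bar>fst p' - fst q'\<bar>"
    using ex_has_least_nat[of "\<lambda>(p, q). p \<in> Z \<and> q \<in> Z \<and> snd p = a \<and> snd q = b"
        "((ca, a), (cb, b))" "\<lambda>(p, q). nat \<bar>fst p - fst q\<bar>"] assms(3,4)
    by auto
  have "fst p = fst q"
  proof (rule ccontr)
    assume "fst p \<noteq> fst q"
    then obtain r where r: "r \<in> Z" "r \<noteq> p" "r \<noteq> q" "r \<in> rect p q"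
      using sat pq ab unfolding satisfied_def pair_satisfied_def collinear_def by blast
    then have "snd r = a \<or> snd r = b"
      using gap[of "snd r"] pq(3,4) by (auto simp: rect_def)
    then show False
    proof
      assume "snd r = a"
      with r(2) pq(3) have "fst r \<noteq> fst p"
        by (auto simp: prod_eq_iff)
      with r(4) have "nat \<bar>fst r - fst q\<bar> < nat \<bar>fst p - fst q\<bar>"
        by (auto simp: rect_def)
      then show False
        using least[OF r(1) pq(2) \<open>snd r = a\<close> pq(4)] by linarith
    next
      assume "snd r = b"
      with r(3) pq(4) have "fst r \<noteq> fst q"
        by (auto simp: prod_eq_iff)
      with r(4) have "nat \<bar>fst p - fst r\<bar> < nat \<bar>fst p - fst q\<bar>"
        by (auto simp: rect_def)
      then show False
        using least[OF pq(1) r(1) pq(3) \<open>snd r = b\<close>] by linarith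
    qed
  qed
  then show ?thesis
    using that pq by (metis prod.collapse)
qed

lemma satisfied_merge_adjacent_rows:
  assumes fin: "finite Z" and sat: "satisfied Z" and ab: "a \<noteq> b"
    and a: "a \<in> snd ` Z" and b: "b \<in> snd ` Z"
    and gap: "\<And>y. y \<in> snd ` Z \<Longrightarrow> min a b \<le> y \<Longrightarrow> y \<le> max a b \<Longrightarrow> y = a \<or> y = b"
  obtains Z' where "finite Z'" "satisfied Z'" "card Z' < card Z" "snd ` Z' = snd ` Z - {a}"
    "{p \<in> Z. snd p \<noteq> a} \<subseteq> Z'"
proof -
  define f where "f y = (if y = a then b else y)" for y
  let ?h = "map_prod id f"
  have "mono_on (snd ` Z) f"
  proof (rule mono_onI)
    fix y y'
    assume y: "y \<in> snd ` Z" and y': "y' \<in> snd ` Z" and "y \<le> y'"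
    then show "f y \<le> f y'"
      using gap[OF y] gap[OF y'] ab unfolding f_def min_def max_def by smt
  qed
  then have sat': "satisfied (?h ` Z)"
    by (rule satisfied_map_prod[OF sat mono_on_id])
  obtain ca cb where "(ca, a) \<in> Z" "(cb, b) \<in> Z"
    using a b by auto
  then obtain c where c: "(c, a) \<in> Z" "(c, b) \<in> Z"
    using adjacent_rows_share_column[OF sat ab _ _ gap] by blast
  have image_eq: "?h ` Z = ?h ` (Z - {(c, a)})"
  proof -
    have "?h (c, a) \<in> ?h ` (Z - {(c, a)})"
      using c ab by (force simp: f_def)
    then show ?thesis
      using c(1) by (metis image_insert insert_Diff insert_absorb)
  qed
  have card: "card (?h ` Z) < card Z"
    unfolding image_eq
    using le_less_trans[OF card_image_le[OF finite_Diff[OF fin]] card_Diff1_less[OF fin c(1)]] .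
  have rows': "snd ` ?h ` Z = snd ` Z - {a}"
    using ab b unfolding image_image by (auto simp: f_def image_iff)
  have kept: "{p \<in> Z. snd p \<noteq> a} \<subseteq> ?h ` Z"
  proof
    fix p
    assume "p \<in> {p \<in> Z. snd p \<noteq> a}"
    then show "p \<in> ?h ` Z"
      by (intro rev_image_eqI[of p]) (auto simp: f_def map_prod_def split: prod.splits)
  qed
  show ?thesis
    using that[OF finite_imageI[OF fin] sat' card rows' kept] .
qed

lemma semi_perm_subset: "semi_perm X \<Longrightarrow> W \<subseteq> X \<Longrightarrow> semi_perm W"
  unfolding semi_perm_def by blast

lemma semi_perm_card_rows: "semi_perm X \<Longrightarrow> card (snd ` X) = card X"
  unfolding semi_perm_def by (intro card_image inj_onI) blast

lemma satisfied_remove_free_row: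
  assumes fin: "finite Z" and sat: "satisfied Z" and "X \<subseteq> Z"
    and a: "a \<in> snd ` Z" "a \<notin> snd ` X" and "snd ` Z \<noteq> {a}"
  obtains Z' where "finite Z'" "satisfied Z'" "X \<subseteq> Z'" "card Z' < card Z"
    "snd ` Z' = snd ` Z - {a}"
proof -
  obtain b0 where "b0 \<in> snd ` Z" "b0 \<noteq> a"
    using assms(4,6) by blast
  then obtain b where b: "b \<in> snd ` Z" "b \<noteq> a"
    and gap: "\<And>y. y \<in> snd ` Z \<Longrightarrow> min a b \<le> y \<Longrightarrow> y \<le> max a b \<Longrightarrow> y = a \<or> y = b"
    by (rule obtain_nearest_neighbour) blast
  obtain Z' where Z': "finite Z'" "satisfied Z'" "card Z' < card Z"
    "snd ` Z' = snd ` Z - {a}" "{p \<in> Z. snd p \<noteq> a} \<subseteq> Z'"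
    using satisfied_merge_adjacent_rows[OF fin sat b(2)[symmetric] a(1) b(1) gap] .
  have "X \<subseteq> {p \<in> Z. snd p \<noteq> a}"
    using assms(3) a(2) by (auto intro: rev_image_eqI)
  then have "X \<subseteq> Z'"
    using Z'(5) by (rule order_trans)
  then show ?thesis
    by (rule that[OF Z'(1,2) _ Z'(3,4)])
qed

lemma opt_add_card_rows_le:
  assumes "finite Z" "satisfied Z" "X \<subseteq> Z" "semi_perm X"
  shows "opt X + card (snd ` Z) \<le> card Z"
  using assms(1-3)
proof (induction "card (snd ` Z - snd ` X)" arbitrary: Z rule: less_induct)
  case less
  show ?case
  proof (cases "snd ` Z \<subseteq> snd ` X")
    case True
    then have "snd ` Z = snd ` X"
      using less.prems(3) by blast
    then have "card (snd ` Z) = card X"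
      using semi_perm_card_rows[OF assms(4)] by simp
    moreover have "card (Z - X) = card Z - card X" "card X \<le> card Z"
      using less.prems(1,3) by (simp_all add: card_Diff_subset finite_subset card_mono)
    ultimately show ?thesis
      using opt_le_card_diff[OF less.prems] by linarith
  next
    case False
    then obtain a where a: "a \<in> snd ` Z" "a \<notin> snd ` X"
      by blast
    show ?thesis
    proof (cases "snd ` Z = {a}")
      case True
      have "snd ` X \<subseteq> snd ` Z"
        using less.prems(3) by (rule image_mono)
      then have "X = {}"
        using True a(2) by auto
      then show ?thesis
        using card_image_le[OF less.prems(1), of snd] by (simp add: opt_def)
    next
      case False
      obtain Z' where Z': "finite Z'" "satisfied Z'" "X \<subseteq> Z'" "card Z' < card Z"
        "snd ` Z' = snd ` Z - {a}"
        by (rule satisfied_remove_free_row[OF less.prems a False])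
      have "snd ` Z' - snd ` X = (snd ` Z - snd ` X) - {a}"
        unfolding Z'(5) by blast
      then have "card (snd ` Z' - snd ` X) < card (snd ` Z - snd ` X)"
        using a less.prems(1) by (simp only:) (rule card_Diff1_less, auto)
      then have "opt X + card (snd ` Z') \<le> card Z'"
        using less.hyps[OF _ Z'(1-3)] by blast
      moreover have "card (snd ` Z') + 1 = card (snd ` Z)"
        unfolding Z'(5) using card_Suc_Diff1[OF finite_imageI[OF less.prems(1)] a(1)] by simp
      ultimately show ?thesis
        using Z'(4) by linarith
    qed
  qed
qed

section \<open>Partitioning trees\<close>

lemma finite_ptree_nodes: "finite (ptree_nodes lo hi t)"
  by (induction t arbitrary: lo hi) auto

lemma ball_ptree_nodes_Node:
  "(\<forall>v \<in> ptree_nodes lo hi (Node k l r). P v) \<longleftrightarrow> P ([], lo, hi)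
     \<and> (\<forall>w \<in> ptree_nodes lo k l. P (False # fst w, snd w))
     \<and> (\<forall>w \<in> ptree_nodes (k + 1) hi r. P (True # fst w, snd w))"
  by (simp add: split_beta ball_Un)

lemma is_ptree_active_cols_nonempty: "is_ptree X lo hi t \<Longrightarrow> active_cols X lo hi \<noteq> {}"
proof (induction t arbitrary: lo hi)
  case (Node k l r)
  then have "active_cols X lo k \<noteq> {}" "k + 1 \<le> hi"
    by auto
  moreover have "active_cols X lo k \<subseteq> active_cols X lo hi" if "k + 1 \<le> hi"
    using that unfolding active_cols_def by auto
  ultimately show ?case
    by blast
qed auto

lemma ptree_nodes_active_within:
  "is_ptree X lo hi t \<Longrightarrow> \<forall>v \<in> ptree_nodes lo hi t.
     lo \<le> fst (snd v) \<and> snd (snd v) \<le> hi \<and> active_cols X (fst (snd v)) (snd (snd v)) \<noteq> {}"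
proof (induction t arbitrary: lo hi)
  case Leaf
  then show ?case
    using is_ptree_active_cols_nonempty[OF Leaf] by simp
next
  case (Node k l r)
  then have k: "lo \<le> k" "k + 1 \<le> hi" and "is_ptree X lo k l" "is_ptree X (k + 1) hi r"
    by simp_all
  note left = Node.IH(1)[OF this(3)] and right = Node.IH(2)[OF this(4)]
  have "\<forall>v \<in> ptree_nodes lo k l. lo \<le> fst (snd v) \<and> snd (snd v) \<le> hi
           \<and> active_cols X (fst (snd v)) (snd (snd v)) \<noteq> {}"
    using left k(2) by fastforce
  moreover have "\<forall>v \<in> ptree_nodes (k + 1) hi r. lo \<le> fst (snd v) \<and> snd (snd v) \<le> hi
           \<and> active_cols X (fst (snd v)) (snd (snd v)) \<noteq> {}"
    using right k(1) by fastforce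
  ultimately show ?case
    unfolding ball_ptree_nodes_Node using is_ptree_active_cols_nonempty[OF Node.prems] by simp
qed

lemma ex_take_eq_iff_prefix: "(\<exists>n. xs = take n ys) \<longleftrightarrow> prefix xs ys"
proof
  assume "\<exists>n. xs = take n ys"
  then show "prefix xs ys"
    using take_is_prefix by blast
next
  assume "prefix xs ys"
  then show "\<exists>n. xs = take n ys"
    by (metis append_eq_conv_conj prefix_def)
qed

abbreviation in_strip :: "bool list \<times> int \<times> int \<Rightarrow> int \<Rightarrow> bool" where
  "in_strip v c \<equiv> fst (snd v) \<le> c \<and> c \<le> snd (snd v)"

lemma ptree_leaf_of_column:
  assumes "is_ptree X lo hi t" "lo \<le> c" "c \<le> hi"
  shows "\<exists>l \<in> ptree_leaves lo hi t. \<forall>v \<in> ptree_nodes lo hi t.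
           in_strip v c \<longleftrightarrow> prefix (fst v) (fst l)"
  using assms
proof (induction t arbitrary: lo hi)
  case Leaf
  then show ?case
    by auto
next
  case (Node k l r)
  then have left: "is_ptree X lo k l" and right: "is_ptree X (k + 1) hi r"
    by auto
  show ?case
  proof (cases "c \<le> k")
    case True
    obtain lf where lf: "lf \<in> ptree_leaves lo k l"
      and IH: "\<forall>w \<in> ptree_nodes lo k l. in_strip w c \<longleftrightarrow> prefix (fst w) (fst lf)"
      using Node.IH(1)[OF left Node.prems(2) True] by blast
    have "\<forall>w \<in> ptree_nodes (k + 1) hi r. \<not> in_strip w c"
      using ptree_nodes_active_within[OF right] True by fastforce
    then have "\<forall>v \<in> ptree_nodes lo hi (Node k l r). in_strip v c \<longleftrightarrow> prefix (fst v) (False # fst lf)"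
      unfolding ball_ptree_nodes_Node using Node.prems(2,3) IH by simp
    moreover have "(False # fst lf, snd lf) \<in> ptree_leaves lo hi (Node k l r)"
      using lf by (auto simp: split_beta intro: rev_image_eqI)
    ultimately show ?thesis
      by (intro bexI) simp_all
  next
    case False
    obtain lf where lf: "lf \<in> ptree_leaves (k + 1) hi r"
      and IH: "\<forall>w \<in> ptree_nodes (k + 1) hi r. in_strip w c \<longleftrightarrow> prefix (fst w) (fst lf)"
      using Node.IH(2)[OF right _ Node.prems(3)] False by force
    have "\<forall>w \<in> ptree_nodes lo k l. \<not> in_strip w c"
      using ptree_nodes_active_within[OF left] False by fastforce
    then have "\<forall>v \<in> ptree_nodes lo hi (Node k l r). in_strip v c \<longleftrightarrow> prefix (fst v) (True # fst lf)"
      unfolding ball_ptree_nodes_Node using Node.prems(2,3) IH by simp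
    moreover have "(True # fst lf, snd lf) \<in> ptree_leaves lo hi (Node k l r)"
      using lf by (auto simp: split_beta intro: rev_image_eqI)
    ultimately show ?thesis
      by (intro bexI) simp_all
  qed
qed

lemma cut_set_unique_strip:
  assumes "partitioning_tree X t" "cut_set X t U" "Min (fst ` X) \<le> c" "c \<le> Max (fst ` X)"
  shows "\<exists>!v. v \<in> U \<and> in_strip v c"
proof -
  obtain l where l: "l \<in> leaves X t"
    and nodes: "\<forall>v \<in> vertices X t. in_strip v c \<longleftrightarrow> prefix (fst v) (fst l)"
    using ptree_leaf_of_column[OF assms(1)[unfolded partitioning_tree_def] assms(3,4)]
    unfolding leaves_def vertices_def by blast
  have "U \<subseteq> vertices X t"
    using assms(2) unfolding cut_set_def by blast
  then have "{v \<in> U. \<exists>n. fst v = take n (fst l)} = {v \<in> U. in_strip v c}"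
    using nodes unfolding ex_take_eq_iff_prefix by blast
  moreover have "card {v \<in> U. \<exists>n. fst v = take n (fst l)} = 1"
    using assms(2) l unfolding cut_set_def by blast
  ultimately have "card {v \<in> U. in_strip v c} = 1"
    by simp
  then obtain v where "{v \<in> U. in_strip v c} = {v}"
    by (rule card_1_singletonE)
  then show ?thesis
    by (intro ex1I[of _ v]) blast+
qed

section \<open>Splitting along a partition of the column range into strips\<close>

text \<open>The cut U enters the argument only through these properties.\<close>

locale strip_partition =
  fixes X :: "point set" and U :: "(bool list \<times> int \<times> int) set"
  assumes finite_X: "finite X" and finite_U: "finite U"
    and unique_strip: "\<And>c. Min (fst ` X) \<le> c \<Longrightarrow> c \<le> Max (fst ` X) \<Longrightarrow> \<exists>!v. v \<in> U \<and> in_strip v c"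
    and strip_inst_nonempty: "\<And>v. v \<in> U \<Longrightarrow> strip_inst X v \<noteq> {}"

lemma cut_set_strip_partition:
  assumes "finite X" "partitioning_tree X t" "cut_set X t U"
  shows "strip_partition X U"
proof
  show "finite X"
    by (fact assms(1))
  have U: "U \<subseteq> ptree_nodes (Min (fst ` X)) (Max (fst ` X)) t"
    using assms(3) unfolding cut_set_def vertices_def by blast
  then show "finite U"
    using finite_ptree_nodes finite_subset by blast
  show "\<exists>!v. v \<in> U \<and> in_strip v c" if "Min (fst ` X) \<le> c" "c \<le> Max (fst ` X)" for c
    using cut_set_unique_strip[OF assms(2,3) that] .
  show "strip_inst X v \<noteq> {}" if "v \<in> U" for v
  proof -
    have "active_cols X (fst (snd v)) (snd (snd v)) \<noteq> {}"
      using ptree_nodes_active_within[OF assms(2)[unfolded partitioning_tree_def]] U that by blast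
    then show ?thesis
      by (auto simp: active_cols_def strip_inst_def)
  qed
qed

context strip_partition
begin

abbreviation in_range :: "int \<Rightarrow> bool" where
  "in_range c \<equiv> Min (fst ` X) \<le> c \<and> c \<le> Max (fst ` X)"

lemma in_range_fst: "p \<in> X \<Longrightarrow> in_range (fst p)"
  using finite_X by simp

definition strip_of :: "int \<Rightarrow> bool list \<times> int \<times> int" where
  "strip_of c = (THE v. v \<in> U \<and> in_strip v c)"

lemma strip_of_spec: "in_range c \<Longrightarrow> strip_of c \<in> U \<and> in_strip (strip_of c) c"
  unfolding strip_of_def using theI'[OF unique_strip] by blast

lemma strip_of_unique: "in_range c \<Longrightarrow> v \<in> U \<Longrightarrow> in_strip v c \<Longrightarrow> strip_of c = v"
  unfolding strip_of_def using unique_strip by (intro the1_equality) auto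

lemma strip_x_mem: "v \<in> U \<Longrightarrow> strip_x X v \<in> fst ` strip_inst X v"
  unfolding strip_x_def using strip_inst_nonempty finite_X by (simp add: strip_inst_def)

definition collapse :: "int \<Rightarrow> int" where
  "collapse c = strip_x X (strip_of c)"

lemma collapse_mono:
  assumes c: "in_range c" and d: "in_range d" and "c \<le> d"
  shows "collapse c \<le> collapse d"
proof (cases "strip_of c = strip_of d")
  case True
  then show ?thesis
    by (simp add: collapse_def)
next
  case False
  let ?v = "strip_of c" and ?w = "strip_of d"
  have v: "?v \<in> U" "fst (snd ?v) \<le> c" "c \<le> snd (snd ?v)"
    using strip_of_spec[OF c] by simp_all
  have w: "?w \<in> U" "fst (snd ?w) \<le> d" "d \<le> snd (snd ?w)"
    using strip_of_spec[OF d] by simp_all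
  have "snd (snd ?v) < fst (snd ?w)"
  proof (rule ccontr)
    let ?e = "max c (fst (snd ?w))"
    assume "\<not> snd (snd ?v) < fst (snd ?w)"
    then have "in_strip ?v ?e" "in_strip ?w ?e" "in_range ?e"
      using v w c d \<open>c \<le> d\<close> by (simp_all add: max_def)
    then show False
      using strip_of_unique[of ?e ?v] strip_of_unique[of ?e ?w] v(1) w(1) False by simp
  qed
  moreover have "in_strip ?v (collapse c)" "in_strip ?w (collapse d)"
    using strip_x_mem[OF v(1)] strip_x_mem[OF w(1)] unfolding collapse_def strip_inst_def by auto
  ultimately show ?thesis
    by linarith
qed

lemma mono_on_collapse: "mono_on {c. in_range c} collapse"
  by (rule mono_onI) (simp add: collapse_mono)

lemma compressed_eq_image: "compressed X U = map_prod collapse id ` X"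
proof
  show "compressed X U \<subseteq> map_prod collapse id ` X"
  proof
    fix z
    assume "z \<in> compressed X U"
    then obtain q v where z: "z = (strip_x X v, snd q)" and v: "v \<in> U" and q: "q \<in> strip_inst X v"
      unfolding compressed_def by blast
    have "q \<in> X" "strip_of (fst q) = v"
      using q strip_of_unique[OF in_range_fst v] unfolding strip_inst_def by auto
    moreover have "z = map_prod collapse id q"
      using z \<open>strip_of (fst q) = v\<close> by (simp add: collapse_def map_prod_def split_beta)
    ultimately show "z \<in> map_prod collapse id ` X"
      by blast
  qed
  show "map_prod collapse id ` X \<subseteq> compressed X U"
  proof
    fix z
    assume "z \<in> map_prod collapse id ` X"
    then obtain q where q: "q \<in> X" and z: "z = (strip_x X (strip_of (fst q)), snd q)"
      by (auto simp: collapse_def map_prod_def split_beta)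
    have "strip_of (fst q) \<in> U" "q \<in> strip_inst X (strip_of (fst q))"
      using strip_of_spec[OF in_range_fst[OF q]] q unfolding strip_inst_def by auto
    then show "z \<in> compressed X U"
      unfolding compressed_def z by blast
  qed
qed

lemma strip_inst_disjoint:
  assumes "\<forall>p\<in>Z. in_range (fst p)" "v \<in> U" "w \<in> U" "v \<noteq> w"
  shows "strip_inst Z v \<inter> strip_inst Z w = {}"
proof -
  have False if "p \<in> strip_inst Z v" "p \<in> strip_inst Z w" for p
  proof -
    have "in_range (fst p)" "in_strip v (fst p)" "in_strip w (fst p)"
      using that assms(1) unfolding strip_inst_def by auto
    then show False
      using strip_of_unique assms(2-4) by metis
  qed
  then show ?thesis
    by blast
qed

lemma strip_inst_cover:
  assumes "\<forall>p\<in>Z. in_range (fst p)"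
  shows "Z = (\<Union>v\<in>U. strip_inst Z v)"
proof
  show "Z \<subseteq> (\<Union>v\<in>U. strip_inst Z v)"
  proof
    fix p
    assume "p \<in> Z"
    then have "strip_of (fst p) \<in> U" "p \<in> strip_inst Z (strip_of (fst p))"
      using strip_of_spec assms unfolding strip_inst_def by auto
    then show "p \<in> (\<Union>v\<in>U. strip_inst Z v)"
      by blast
  qed
qed (auto simp: strip_inst_def)

lemma card_eq_sum_strips:
  assumes "finite Z" "\<forall>p\<in>Z. in_range (fst p)"
  shows "card Z = (\<Sum>v\<in>U. card (strip_inst Z v))"
proof -
  have "card (\<Union>v\<in>U. strip_inst Z v) = (\<Sum>v\<in>U. card (strip_inst Z v))"
    using finite_U assms(1) strip_inst_disjoint[OF assms(2)]
    by (intro card_UN_disjoint) (auto simp: strip_inst_def)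
  then show ?thesis
    using strip_inst_cover[OF assms(2)] by simp
qed

lemma card_collapse_le:
  assumes "finite Z" "\<forall>p\<in>Z. in_range (fst p)"
  shows "card (map_prod collapse id ` Z) \<le> (\<Sum>v\<in>U. card (snd ` strip_inst Z v))"
proof -
  have "map_prod collapse id ` Z \<subseteq> (\<Union>v\<in>U. Pair (strip_x X v) ` snd ` strip_inst Z v)"
  proof
    fix z
    assume "z \<in> map_prod collapse id ` Z"
    then obtain p where p: "p \<in> Z" and z: "z = (strip_x X (strip_of (fst p)), snd p)"
      by (auto simp: collapse_def map_prod_def split_beta)
    have "strip_of (fst p) \<in> U" "p \<in> strip_inst Z (strip_of (fst p))"
      using strip_of_spec p assms(2) unfolding strip_inst_def by auto
    then show "z \<in> (\<Union>v\<in>U. Pair (strip_x X v) ` snd ` strip_inst Z v)"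
      unfolding z by blast
  qed
  then have "card (map_prod collapse id ` Z) \<le> card (\<Union>v\<in>U. Pair (strip_x X v) ` snd ` strip_inst Z v)"
    using finite_U assms(1) by (intro card_mono) (auto simp: strip_inst_def)
  also have "\<dots> \<le> (\<Sum>v\<in>U. card (Pair (strip_x X v) ` snd ` strip_inst Z v))"
    by (rule card_UN_le[OF finite_U])
  also have "\<dots> = (\<Sum>v\<in>U. card (snd ` strip_inst Z v))"
    by (intro sum.cong refl card_image) (simp add: inj_on_def)
  finally show ?thesis .
qed

lemma sum_opt_strips_le:
  assumes "semi_perm X" "finite Z" "satisfied Z" "X \<subseteq> Z" "\<forall>p\<in>Z. in_range (fst p)"
  shows "(\<Sum>v\<in>U. opt (strip_inst X v)) + (\<Sum>v\<in>U. card (snd ` strip_inst Z v)) \<le> card Z"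
proof -
  have "opt (strip_inst X v) + card (snd ` strip_inst Z v) \<le> card (strip_inst Z v)" for v
  proof (rule opt_add_card_rows_le)
    show "finite (strip_inst Z v)" "strip_inst X v \<subseteq> strip_inst Z v"
      using assms(2,4) unfolding strip_inst_def by auto
    show "satisfied (strip_inst Z v)"
      unfolding strip_inst_def by (rule satisfied_restrict_columns[OF assms(3)])
    show "semi_perm (strip_inst X v)"
      using assms(1) by (rule semi_perm_subset) (auto simp: strip_inst_def)
  qed
  then have "(\<Sum>v\<in>U. opt (strip_inst X v) + card (snd ` strip_inst Z v)) \<le> (\<Sum>v\<in>U. card (strip_inst Z v))"
    by (rule sum_mono)
  then show ?thesis
    using card_eq_sum_strips[OF assms(2,5)] by (simp add: sum.distrib)
qed

lemma opt_compressed_le: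
  assumes "semi_perm X" "finite Z" "satisfied Z" "X \<subseteq> Z" "\<forall>p\<in>Z. in_range (fst p)"
  shows "opt (compressed X U) + card X \<le> (\<Sum>v\<in>U. card (snd ` strip_inst Z v))"
proof -
  let ?h = "map_prod collapse id"
  have "mono_on (fst ` Z) collapse"
    using mono_on_collapse by (rule mono_on_subset) (use assms(5) in auto)
  then have "satisfied (?h ` Z)"
    using satisfied_map_prod[OF assms(3) _ mono_on_id] by blast
  then have "opt (?h ` X) \<le> card (?h ` Z - ?h ` X)"
    using assms(2,4) by (intro opt_le_card_diff) auto
  also have "\<dots> = card (?h ` Z) - card (?h ` X)"
    using assms(4) finite_X by (intro card_Diff_subset) auto
  finally have "opt (?h ` X) + card (?h ` X) \<le> card (?h ` Z)"
    using card_mono[OF finite_imageI[OF assms(2)] image_mono[OF assms(4)], of ?h] by linarith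
  moreover have "card (?h ` X) = card X"
    using assms(1) by (intro card_image inj_onI) (auto simp: semi_perm_def map_prod_def split_beta)
  ultimately have "opt (compressed X U) + card X \<le> card (?h ` Z)"
    unfolding compressed_eq_image by simp
  also have "\<dots> \<le> (\<Sum>v\<in>U. card (snd ` strip_inst Z v))"
    by (rule card_collapse_le[OF assms(2,5)])
  finally show ?thesis .
qed

theorem sum_opt_strips_compressed_le:
  assumes "semi_perm X"
  shows "(\<Sum>v\<in>U. opt (strip_inst X v)) + opt (compressed X U) \<le> opt X"
proof -
  obtain Y where Y: "finite Y" "card Y = opt X" "satisfied (X \<union> Y)"
    using opt_witness[OF finite_X] by blast
  define Z where "Z = {p \<in> X \<union> Y. in_range (fst p)}"
  have Z: "finite Z" "satisfied Z" "X \<subseteq> Z" "\<forall>p\<in>Z. in_range (fst p)"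
    unfolding Z_def
    using finite_X Y(1) satisfied_restrict_columns[OF Y(3)] in_range_fst by (simp, blast+)
  have "card Z \<le> card (X \<union> Y)"
    unfolding Z_def using finite_X Y(1) by (intro card_mono) auto
  then have "card Z \<le> card X + card Y"
    using card_Un_le[of X Y] by linarith
  then show ?thesis
    using sum_opt_strips_le[OF assms Z] opt_compressed_le[OF assms Z] Y(2) by linarith
qed

end

theorem theorem3p3:
  fixes X :: "point set" and t :: ptree and U :: "(bool list \<times> int \<times> int) set"
  assumes "finite X"
    and "semi_perm X"
    and "partitioning_tree X t"
    and "cut_set X t U"
  shows "(\<Sum>v\<in>U. opt (strip_inst X v)) + opt (compressed X U) \<le> opt X"
proof -
  interpret strip_partition X U
    using cut_set_strip_partition[OF assms(1,3,4)] .
  show ?thesis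
    using sum_opt_strips_compressed_le[OF assms(2)] .
qed

end
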